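(* Let $\langle B,\wedge,{}'\rangle$ be an algebra with $\wedge$ binary and ${}'$ unary satisfying $x\wedge(y\wedge z)\approx z\wedge(y\wedge x)$, $x''\approx x$, and $x'\approx (x\wedge y)'\wedge(x\wedge y')'$. Then $x'\wedge y'=y'\wedge x'$ for all $x,y\in B$. *)

theory Defs
  imports Main
begin

end

theory Submission
  imports Defs
begin

(* Write p = (x y)' and q = (x y')'.  The third axiom and its instance at y' say x' = p q = q p;
   together with the flip law x (y z) = z (y x) this lets x' be moved past p, which gives the
   associativity instance (p z) x' = p (z x').  For y' both factorisations y' = p z = z p hold
   with p = (y (x x))' = (x (x y))' and z = (y (x x)')', so y' x' = (p z) x' = p (z x') = x' (z p) = x' y'. *)

locale flip_compl_algebra =
  fixes meet :: "'a \<Rightarrow> 'a \<Rightarrow> 'a" (infixr "\<cdot>" 70)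
    and compl :: "'a \<Rightarrow> 'a" ("_\<^sup>\<bottom>" [1000] 1000)
  assumes meet_flip: "x \<cdot> (y \<cdot> z) = z \<cdot> (y \<cdot> x)"
    and compl_compl: "x\<^sup>\<bottom>\<^sup>\<bottom> = x"
    and compl_split: "x\<^sup>\<bottom> = (x \<cdot> y)\<^sup>\<bottom> \<cdot> (x \<cdot> y\<^sup>\<bottom>)\<^sup>\<bottom>"
begin

lemma compl_split_swap: "x\<^sup>\<bottom> = (x \<cdot> y\<^sup>\<bottom>)\<^sup>\<bottom> \<cdot> (x \<cdot> y)\<^sup>\<bottom>"
  using compl_split [of x "y\<^sup>\<bottom>"] by (simp add: compl_compl)

lemma meet_compl_right: "z \<cdot> x\<^sup>\<bottom> = (x \<cdot> y)\<^sup>\<bottom> \<cdot> ((x \<cdot> y\<^sup>\<bottom>)\<^sup>\<bottom> \<cdot> z)"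
  by (metis meet_flip compl_split_swap)

lemma meet_compl_right_swap: "z \<cdot> x\<^sup>\<bottom> = (x \<cdot> y\<^sup>\<bottom>)\<^sup>\<bottom> \<cdot> ((x \<cdot> y)\<^sup>\<bottom> \<cdot> z)"
  by (metis meet_flip compl_split)

lemma meet_assoc_compl: "((x \<cdot> y)\<^sup>\<bottom> \<cdot> z) \<cdot> x\<^sup>\<bottom> = (x \<cdot> y)\<^sup>\<bottom> \<cdot> (z \<cdot> x\<^sup>\<bottom>)"
proof -
  let ?p = "(x \<cdot> y)\<^sup>\<bottom>" and ?q = "(x \<cdot> y\<^sup>\<bottom>)\<^sup>\<bottom>"
  have "?p \<cdot> (z \<cdot> x\<^sup>\<bottom>) = ?p \<cdot> (?q \<cdot> (?p \<cdot> z))"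
    by (simp only: meet_compl_right_swap [of z x y])
  also have "\<dots> = (?p \<cdot> z) \<cdot> x\<^sup>\<bottom>"
    by (simp only: meet_compl_right [of "?p \<cdot> z" x y])
  finally show ?thesis ..
qed

lemma compl_meet_commute: "x\<^sup>\<bottom> \<cdot> y\<^sup>\<bottom> = y\<^sup>\<bottom> \<cdot> x\<^sup>\<bottom>"
proof -
  let ?p = "(x \<cdot> (x \<cdot> y))\<^sup>\<bottom>" and ?z = "(y \<cdot> (x \<cdot> x)\<^sup>\<bottom>)\<^sup>\<bottom>"
  have p_eq: "?p = (y \<cdot> (x \<cdot> x))\<^sup>\<bottom>"
    by (simp only: meet_flip [of x x y])
  have "y\<^sup>\<bottom> \<cdot> x\<^sup>\<bottom> = (?p \<cdot> ?z) \<cdot> x\<^sup>\<bottom>"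
    using compl_split [of y "x \<cdot> x"] p_eq by simp
  also have "\<dots> = ?p \<cdot> (?z \<cdot> x\<^sup>\<bottom>)"
    by (rule meet_assoc_compl)
  also have "\<dots> = x\<^sup>\<bottom> \<cdot> (?z \<cdot> ?p)"
    by (rule meet_flip)
  also have "\<dots> = x\<^sup>\<bottom> \<cdot> y\<^sup>\<bottom>"
    using compl_split_swap [of y "x \<cdot> x"] p_eq by simp
  finally show ?thesis ..
qed

end

theorem lemma7p6:
  fixes meet :: "'a \<Rightarrow> 'a \<Rightarrow> 'a" and c :: "'a \<Rightarrow> 'a"
  assumes A1: "\<And>x y z. meet x (meet y z) = meet z (meet y x)"
    and A2: "\<And>x. c (c x) = x"
    and A3: "\<And>x y. c x = meet (c (meet x y)) (c (meet x (c y)))"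
  shows "\<forall>x y. meet (c x) (c y) = meet (c y) (c x)"
proof -
  interpret flip_compl_algebra meet c
    by unfold_locales (fact A1 A2 A3)+
  show ?thesis
    using compl_meet_commute by blast
qed

end
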